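(* Let $r_1,r_2,r_3,L>0$ with $r_2>\max(r_1,r_3)$. Let $m(y)=r_1\mathbf 1_{y<0}+r_2\mathbf 1_{0\le y<1}+r_3\mathbf 1_{1\le y}$ and $\mathcal L=L^{-2}\frac{d^2}{dy^2}+m$. Define the generalized principal eigenvalue $$\lambda_1=\sup\{\lambda\in\mathbb{R} : \exists\,\varphi\in W^{2,1}_{\mathrm{loc}}(\mathbb{R}),\ \varphi>0,\ (\mathcal L+\lambda)\varphi\le0\}.$$ Let $\underline{L}=0$ if $r_1=r_3$ and $\underline{L}=\frac{1}{\sqrt{r_2-\max(r_1,r_3)}}\operatorname{arccot}\big(\sqrt{\frac{r_2-\max(r_1,r_3)}{|r_1-r_3|}}\big)$ if $r_1\ne r_3$, where $\operatorname{arccot}$ is the inverse of $\cot|_{(0,\pi)}$. Then: (i) if $L\le\underline{L}$, then $\lambda_1=-\max(r_1,r_3)$; (ii) if $L>\underline{L}$, then $\lambda_1$ is the unique zero of the function $$\lambda\in(-r_2,\overline{\lambda})\mapsto\cot\big(L\sqrt{r_2+\lambda}\big)-\frac{r_2+\lambda-\sqrt{(r_1+\lambda)(r_3+\lambda)}}{\sqrt{r_2+\lambda}\big(\sqrt{-r_1-\lambda}+\sqrt{-r_3-\lambda}\big)},$$ where $\overline{\lambda}=\min\big(-\max(r_1,r_3),\frac{\pi^2}{L^2}-r_2\big)$. *)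

theory Defs
  imports "HOL-Analysis.Analysis"
begin

definition mcoef :: "real \<Rightarrow> real \<Rightarrow> real \<Rightarrow> real \<Rightarrow> real" where
  "mcoef r1 r2 r3 y = (if y < 0 then r1 else if y < 1 then r2 else r3)"

text \<open>phi in W^{2,1}_loc(R) (one-dimensional): phi is differentiable with derivative dphi,
  and dphi is locally absolutely continuous with weak derivative ddphi in L^1_loc,
  i.e. dphi b - dphi a is the integral of ddphi over [a,b].\<close>
definition W21loc :: "(real \<Rightarrow> real) \<Rightarrow> (real \<Rightarrow> real) \<Rightarrow> (real \<Rightarrow> real) \<Rightarrow> bool" where
  "W21loc phi dphi ddphi \<longleftrightarrow>
     (\<forall>x. (phi has_real_derivative dphi x) (at x)) \<and>
     (\<forall>a b. ddphi absolutely_integrable_on {a..b}) \<and>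
     (\<forall>a b. a \<le> b \<longrightarrow> (ddphi has_integral (dphi b - dphi a)) {a..b})"

definition gen_princ_eig :: "real \<Rightarrow> (real \<Rightarrow> real) \<Rightarrow> real" where
  "gen_princ_eig L m = Sup {lam. \<exists>phi dphi ddphi. W21loc phi dphi ddphi \<and> (\<forall>y. phi y > 0) \<and>
       (AE y in lborel. ddphi y / L\<^sup>2 + m y * phi y + lam * phi y \<le> 0)}"

definition arccot :: "real \<Rightarrow> real" where
  "arccot x = (THE t. 0 < t \<and> t < pi \<and> cot t = x)"

definition Lunder :: "real \<Rightarrow> real \<Rightarrow> real \<Rightarrow> real" where
  "Lunder r1 r2 r3 = (if r1 = r3 then 0 else
     1 / sqrt (r2 - max r1 r3) * arccot (sqrt ((r2 - max r1 r3) / \<bar>r1 - r3\<bar>)))"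

definition lam_bar :: "real \<Rightarrow> real \<Rightarrow> real \<Rightarrow> real \<Rightarrow> real" where
  "lam_bar r1 r2 r3 L = min (- max r1 r3) (pi\<^sup>2 / L\<^sup>2 - r2)"

definition Fdisp :: "real \<Rightarrow> real \<Rightarrow> real \<Rightarrow> real \<Rightarrow> real \<Rightarrow> real" where
  "Fdisp r1 r2 r3 L lam = cot (L * sqrt (r2 + lam)) -
     (r2 + lam - sqrt ((r1 + lam) * (r3 + lam))) /
     (sqrt (r2 + lam) * (sqrt (- r1 - lam) + sqrt (- r3 - lam)))"

end

theory Submission
  imports Defs
begin

(* lambda_1 is the supremum of the lam admitting a positive weak supersolution of
   phi'' + c phi <= 0 with c = L^2 (m + lam). By a Sturm-type comparison (a strong minimum
   principle), such a supersolution dominates any solution of the equation with a smaller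
   constant on an interval where it does so at the endpoints. Comparing with sine arches inside
   the outer layers gives lambda_1 <= - max r1 r3; comparing with a positive eigenfunction that
   decays exponentially at both ends shows that no lam above its eigenvalue is admissible.
   Such eigenfunctions are glued from two exponentials and a trigonometric middle piece, and
   C^1 matching at y = 1 is exactly Fdisp = 0; for L <= Lunder a positive solution already
   exists at lam = - max r1 r3. For L > Lunder, Fdisp is positive near - r2 and negative
   near lam_bar, so it has a zero in between. *)

section \<open>Weak solutions of u'' + c u = 0\<close>

definition weak_solution_on ::
    "(real \<Rightarrow> real) \<Rightarrow> (real \<Rightarrow> real) \<Rightarrow> (real \<Rightarrow> real) \<Rightarrow> real set \<Rightarrow> bool" where
  "weak_solution_on c u du S \<longleftrightarrow>
     (\<forall>x\<in>S. (u has_real_derivative du x) (at x)) \<and>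
     (\<forall>a\<in>S. \<forall>b\<in>S. a \<le> b \<longrightarrow> ((\<lambda>y. - c y * u y) has_integral (du b - du a)) {a..b})"

definition weak_supersolution ::
    "(real \<Rightarrow> real) \<Rightarrow> (real \<Rightarrow> real) \<Rightarrow> (real \<Rightarrow> real) \<Rightarrow> bool" where
  "weak_supersolution c u du \<longleftrightarrow>
     (\<forall>x. (u has_real_derivative du x) (at x)) \<and>
     (\<forall>a b. a \<le> b \<longrightarrow> (\<exists>I. ((\<lambda>y. - c y * u y) has_integral I) {a..b} \<and> du b - du a \<le> I))"

lemma has_integral_reflect_shift:
  fixes f :: "real \<Rightarrow> 'a::banach"
  assumes "(f has_integral i) {s - b..s - a}"
  shows "((\<lambda>y. f (s - y)) has_integral i) {a..b}"
proof -
  have "((\<lambda>x. f (x + s)) has_integral i) {-b..-a}"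
    using has_integral_shift_real_ivl[OF assms, of s] by simp
  then show ?thesis
    using has_integral_reflect_real[of "\<lambda>x. f (x + s)" i "-a" "-b"] by simp
qed

lemma has_real_derivative_reflect_shift:
  assumes "(u has_real_derivative du (s - x)) (at (s - x))"
  shows "((\<lambda>y. u (s - y)) has_real_derivative - du (s - x)) (at x)"
proof -
  have "((\<lambda>y. s - y) has_real_derivative -1) (at x)"
    by (auto intro!: derivative_eq_intros)
  from DERIV_chain2[of u, OF assms this] show ?thesis by simp
qed

lemma weak_supersolution_reflect:
  assumes "weak_supersolution c u du"
  shows "weak_supersolution (\<lambda>y. c (s - y)) (\<lambda>y. u (s - y)) (\<lambda>y. - du (s - y))"
  unfolding weak_supersolution_def
proof (intro conjI allI impI)
  show "((\<lambda>y. u (s - y)) has_real_derivative - du (s - x)) (at x)" for x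
    using assms unfolding weak_supersolution_def by (blast intro: has_real_derivative_reflect_shift)
  fix a b :: real
  assume "a \<le> b"
  then obtain I where "((\<lambda>y. - c y * u y) has_integral I) {s - b..s - a}" "du (s - a) - du (s - b) \<le> I"
    using assms unfolding weak_supersolution_def by (meson diff_left_mono)
  then show "\<exists>I. ((\<lambda>y. - c (s - y) * u (s - y)) has_integral I) {a..b} \<and> - du (s - b) - - du (s - a) \<le> I"
    by (auto dest: has_integral_reflect_shift)
qed

lemma weak_solution_on_reflect:
  assumes "weak_solution_on c u du UNIV"
  shows "weak_solution_on (\<lambda>y. c (s - y)) (\<lambda>y. u (s - y)) (\<lambda>y. - du (s - y)) UNIV"
  unfolding weak_solution_on_def
proof (intro conjI ballI impI)
  show "((\<lambda>y. u (s - y)) has_real_derivative - du (s - x)) (at x)" for x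
    using assms unfolding weak_solution_on_def by (blast intro: has_real_derivative_reflect_shift)
  fix a b :: real
  assume "a \<le> b"
  then have "((\<lambda>y. - c y * u y) has_integral (du (s - a) - du (s - b))) {s - b..s - a}"
    using assms unfolding weak_solution_on_def by simp
  then show "((\<lambda>y. - c (s - y) * u (s - y)) has_integral (- du (s - b) - - du (s - a))) {a..b}"
    by (auto dest: has_integral_reflect_shift)
qed

lemma weak_solution_on_coeff_cong:
  assumes "weak_solution_on c u du S" "is_interval S" "finite F"
    and "\<And>y. y \<in> S \<Longrightarrow> y \<notin> F \<Longrightarrow> c y = c' y"
  shows "weak_solution_on c' u du S"
  unfolding weak_solution_on_def
proof (intro conjI ballI impI)
  show "(u has_real_derivative du x) (at x)" if "x \<in> S" for x
    using assms(1) that unfolding weak_solution_on_def by blast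
  fix a b assume ab: "a \<in> S" "b \<in> S" "a \<le> b"
  have "((\<lambda>y. - c y * u y) has_integral (du b - du a)) {a..b}"
    using assms(1) ab unfolding weak_solution_on_def by blast
  then show "((\<lambda>y. - c' y * u y) has_integral (du b - du a)) {a..b}"
  proof (rule has_integral_spike_finite[OF assms(3), rotated])
    fix y assume "y \<in> {a..b} - F"
    then have "y \<in> S" "y \<notin> F" using mem_is_interval_1_I[OF assms(2) ab(1,2)] by auto
    then show "- c' y * u y = - c y * u y" using assms(4) by simp
  qed
qed

lemma weak_solution_on_const_coeff:
  assumes "\<And>x. (u has_real_derivative du x) (at x)"
    and "\<And>x. (du has_real_derivative - k * u x) (at x)"
  shows "weak_solution_on (\<lambda>_. k) u du S"
  unfolding weak_solution_on_def
proof (intro conjI ballI impI)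
  show "(u has_real_derivative du x) (at x)" for x by (fact assms(1))
  fix a b :: real assume "a \<le> b"
  then show "((\<lambda>y. - k * u y) has_integral (du b - du a)) {a..b}"
    using assms(2) by (intro fundamental_theorem_of_calculus)
      (auto simp flip: has_real_derivative_iff_has_vector_derivative intro: has_field_derivative_at_within)
qed

lemma has_real_derivative_glue:
  assumes "x \<le> x0 \<Longrightarrow> (u has_real_derivative du x) (at x)"
    and "x0 \<le> x \<Longrightarrow> (v has_real_derivative dv x) (at x)"
    and "u x0 = v x0" "du x0 = dv x0"
  shows "((\<lambda>y. if y < x0 then u y else v y) has_real_derivative (if x < x0 then du x else dv x)) (at x)"
proof -
  have "((\<lambda>y. if y \<in> {..<x0} then u y else v y) has_vector_derivative
      (if x \<in> {..<x0} then du x else dv x)) (at x within UNIV)"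
    using assms by (intro has_vector_derivative_If_within_closures[where S="{..<x0}" and T="{x0..}"])
      (auto simp flip: has_real_derivative_iff_has_vector_derivative intro: has_field_derivative_at_within)
  then show ?thesis by (simp add: has_real_derivative_iff_has_vector_derivative)
qed

lemma weak_solution_on_glue:
  assumes u: "weak_solution_on c u du (S \<inter> {..x0})" and v: "weak_solution_on c v dv (S \<inter> {x0..})"
    and "x0 \<in> S" and match: "u x0 = v x0" "du x0 = dv x0"
  shows "weak_solution_on c (\<lambda>y. if y < x0 then u y else v y) (\<lambda>y. if y < x0 then du y else dv y) S"
  unfolding weak_solution_on_def
proof (intro conjI ballI impI)
  show "((\<lambda>y. if y < x0 then u y else v y) has_real_derivative (if x < x0 then du x else dv x)) (at x)"
    if "x \<in> S" for x
    using u v that match unfolding weak_solution_on_def by (intro has_real_derivative_glue) auto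
next
  fix a b assume ab: "a \<in> S" "b \<in> S" "a \<le> b"
  let ?w = "\<lambda>y. if y < x0 then u y else v y" and ?dw = "\<lambda>y. if y < x0 then du y else dv y"
  have left: "((\<lambda>y. - c y * ?w y) has_integral (?dw q - ?dw p)) {p..q}"
    if "p \<in> S" "q \<in> S" "p \<le> q" "q \<le> x0" for p q
  proof -
    have "((\<lambda>y. - c y * u y) has_integral (du q - du p)) {p..q}"
      using u that unfolding weak_solution_on_def by auto
    moreover have "?w y = u y" if "y \<in> {p..q}" for y
    proof (cases "y < x0")
      case False
      with that \<open>q \<le> x0\<close> have "y = x0" by auto
      with match show ?thesis by simp
    qed simp
    ultimately show ?thesis using that match by (auto intro: has_integral_eq)
  qed
  have right: "((\<lambda>y. - c y * ?w y) has_integral (?dw q - ?dw p)) {p..q}"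
    if "p \<in> S" "q \<in> S" "p \<le> q" "x0 \<le> p" for p q
  proof -
    have "((\<lambda>y. - c y * v y) has_integral (dv q - dv p)) {p..q}"
      using v that unfolding weak_solution_on_def by auto
    then show ?thesis using that by (auto intro: has_integral_eq)
  qed
  consider "b \<le> x0" | "x0 \<le> a" | "a < x0" "x0 < b" by linarith
  then show "((\<lambda>y. - c y * ?w y) has_integral (?dw b - ?dw a)) {a..b}"
  proof cases
    case 1
    then show ?thesis by (rule left[OF ab])
  next
    case 2
    then show ?thesis by (rule right[OF ab])
  next
    case 3
    then have "((\<lambda>y. - c y * ?w y) has_integral ((?dw x0 - ?dw a) + (?dw b - ?dw x0))) {a..b}"
      using ab \<open>x0 \<in> S\<close> by (intro has_integral_combine[of a x0 b] left right) auto
    then show ?thesis by simp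
  qed
qed

lemma weak_solution_on_mcoef_glue:
  assumes "\<And>x. (f1 has_real_derivative df1 x) (at x)" "\<And>x. (df1 has_real_derivative - k1 * f1 x) (at x)"
    and "\<And>x. (f2 has_real_derivative df2 x) (at x)" "\<And>x. (df2 has_real_derivative - k2 * f2 x) (at x)"
    and "\<And>x. (f3 has_real_derivative df3 x) (at x)" "\<And>x. (df3 has_real_derivative - k3 * f3 x) (at x)"
    and "f1 0 = f2 0" "df1 0 = df2 0" "f2 1 = f3 1" "df2 1 = df3 1"
  shows "weak_solution_on (mcoef k1 k2 k3)
    (\<lambda>y. if y < 0 then f1 y else if y < 1 then f2 y else f3 y)
    (\<lambda>y. if y < 0 then df1 y else if y < 1 then df2 y else df3 y) UNIV"
proof -
  have piece: "weak_solution_on (mcoef k1 k2 k3) f df S"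
    if "\<And>x. (f has_real_derivative df x) (at x)" "\<And>x. (df has_real_derivative - k * f x) (at x)"
      "is_interval S" "\<And>y. y \<in> S \<Longrightarrow> y \<notin> {0, 1} \<Longrightarrow> mcoef k1 k2 k3 y = k" for f df k S
  proof (rule weak_solution_on_coeff_cong[of _ _ _ _ "{0, 1}"])
    show "weak_solution_on (\<lambda>_. k) f df S" using that(1,2) by (rule weak_solution_on_const_coeff)
  qed (use that(3,4) in auto)
  have h: "weak_solution_on (mcoef k1 k2 k3) (\<lambda>y. if y < 1 then f2 y else f3 y)
      (\<lambda>y. if y < 1 then df2 y else df3 y) {0..}"
  proof (rule weak_solution_on_glue)
    show "weak_solution_on (mcoef k1 k2 k3) f2 df2 ({0..} \<inter> {..1})"
      by (rule piece[OF assms(3,4)]) (auto simp: mcoef_def intro: is_interval_Int)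
    show "weak_solution_on (mcoef k1 k2 k3) f3 df3 ({0..} \<inter> {1..})"
      by (rule piece[OF assms(5,6)]) (auto simp: mcoef_def intro: is_interval_Int)
  qed (use assms(9,10) in auto)
  show ?thesis
  proof (rule weak_solution_on_glue)
    show "weak_solution_on (mcoef k1 k2 k3) f1 df1 (UNIV \<inter> {..0})"
      by (rule piece[OF assms(1,2)]) (auto simp: mcoef_def intro: is_interval_Int)
    show "weak_solution_on (mcoef k1 k2 k3) (\<lambda>y. if y < 1 then f2 y else f3 y)
      (\<lambda>y. if y < 1 then df2 y else df3 y) (UNIV \<inter> {0..})" using h by simp
  qed (use assms(7,8) in auto)
qed

lemma weak_solution_on_subset:
  "weak_solution_on c u du T \<Longrightarrow> S \<subseteq> T \<Longrightarrow> weak_solution_on c u du S"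
  unfolding weak_solution_on_def by blast

lemma weak_solution_on_cmult:
  assumes "weak_solution_on c u du S"
  shows "weak_solution_on c (\<lambda>y. K * u y) (\<lambda>y. K * du y) S"
  unfolding weak_solution_on_def
proof (intro conjI ballI impI)
  fix x assume "x \<in> S"
  then have "(u has_real_derivative du x) (at x)"
    using assms unfolding weak_solution_on_def by blast
  then show "((\<lambda>y. K * u y) has_real_derivative K * du x) (at x)" by (rule DERIV_cmult)
next
  fix a b assume "a \<in> S" "b \<in> S" "a \<le> b"
  then have "((\<lambda>y. - c y * u y) has_integral (du b - du a)) {a..b}"
    using assms unfolding weak_solution_on_def by blast
  from has_integral_mult_right[OF this, of K]
  show "((\<lambda>y. - c y * (K * u y)) has_integral (K * du b - K * du a)) {a..b}"
    by (simp add: algebra_simps)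
qed

section \<open>Comparison with positive supersolutions\<close>

text \<open>At an interior zero x0 of w \<ge> 0 we have w' x0 = 0; the increments of w' right of x0 are
  bounded by integrals of G < 0, so w' and then w become negative.\<close>
lemma strong_minimum_principle:
  fixes w w' G :: "real \<Rightarrow> real"
  assumes "p < x0" "x0 < q" "\<forall>y\<in>{p..q}. 0 \<le> w y"
    and "\<forall>y\<in>{p..q}. (w has_real_derivative w' y) (at y)"
    and "continuous_on {x0..q} G" "G x0 < 0"
    and "\<forall>x\<in>{x0<..q}. \<exists>I. (G has_integral I) {x0..x} \<and> w' x - w' x0 \<le> I"
  shows "w x0 \<noteq> 0"
proof
  assume "w x0 = 0"
  have w'0: "w' x0 = 0"
  proof (rule DERIV_local_min)
    show "(w has_real_derivative w' x0) (at x0)" using assms by auto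
    show "0 < min (x0 - p) (q - x0)" using assms by auto
    show "\<forall>y. \<bar>x0 - y\<bar> < min (x0 - p) (q - x0) \<longrightarrow> w x0 \<le> w y"
      using assms(3) \<open>w x0 = 0\<close> by (auto simp: abs_less_iff)
  qed
  obtain d where d: "d > 0" "\<forall>y\<in>{x0..q}. dist y x0 < d \<longrightarrow> dist (G y) (G x0) < - G x0 / 2"
    using assms(5,6) \<open>x0 < q\<close> unfolding continuous_on_iff by (metis atLeastAtMost_iff
        divide_pos_pos less_eq_real_def neg_0_less_iff_less zero_less_numeral)
  define x1 where "x1 = min (x0 + d/2) q"
  have x1: "x0 < x1" "x1 \<le> q" "x1 < x0 + d" using d assms unfolding x1_def by auto
  have G_neg: "G y \<le> G x0 / 2" if "y \<in> {x0..x1}" for y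
    using d that x1 by (force simp: dist_real_def)
  have w'_neg: "w' x < 0" if x: "x \<in> {x0<..x1}" for x
  proof -
    obtain I where I: "(G has_integral I) {x0..x}" "w' x - w' x0 \<le> I"
      using assms(7) x x1 by force
    have "I \<le> (x - x0) * (G x0 / 2)"
      using has_integral_le[OF I(1) has_integral_const_real[of "G x0 / 2" x0 x]] G_neg x by auto
    also have "\<dots> < 0" using x assms(6) by (auto intro: mult_pos_neg)
    finally show ?thesis using I w'0 by linarith
  qed
  obtain z where z: "x0 < z" "z < x1" "w x1 - w x0 = (x1 - x0) * w' z"
    using MVT2[OF x1(1), of w w'] assms(1,4) x1 by auto
  have "w x1 < 0" using z w'_neg[of z] x1 \<open>w x0 = 0\<close> by (simp add: mult_pos_neg)
  moreover have "x1 \<in> {p..q}" using assms(1) x1 by auto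
  ultimately show False using assms(3) by fastforce
qed

lemma weak_supersolution_diff_bound:
  assumes phi: "weak_supersolution c phi dphi"
    and v: "weak_solution_on (\<lambda>y. c y - \<delta>) v dv {lo..hi}"
    and B: "\<forall>y\<in>{lo..hi}. \<bar>c y\<bar> \<le> B" and "lo \<le> p" "p \<le> q" "q \<le> hi"
  shows "\<exists>I. ((\<lambda>y. B * \<bar>phi y - t * v y\<bar> - t * \<delta> * v y) has_integral I) {p..q} \<and>
    (dphi q - t * dv q) - (dphi p - t * dv p) \<le> I"
proof -
  let ?G = "\<lambda>y. B * \<bar>phi y - t * v y\<bar> - t * \<delta> * v y"
  obtain I where I: "((\<lambda>y. - c y * phi y) has_integral I) {p..q}" "dphi q - dphi p \<le> I"
    using phi \<open>p \<le> q\<close> unfolding weak_supersolution_def by blast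
  have "((\<lambda>y. - (c y - \<delta>) * v y) has_integral (dv q - dv p)) {p..q}"
    using v assms(4-6) unfolding weak_solution_on_def by auto
  with I(1) have Idiff: "((\<lambda>y. - c y * phi y - t * (- (c y - \<delta>) * v y))
      has_integral (I - t * (dv q - dv p))) {p..q}"
    by (intro has_integral_diff has_integral_mult_right)
  have "continuous_on {p..q} phi" "continuous_on {p..q} v"
    using phi v assms(4-6) unfolding weak_supersolution_def weak_solution_on_def
    by (auto intro!: continuous_at_imp_continuous_on DERIV_isCont)
  then have IG: "(?G has_integral integral {p..q} ?G) {p..q}"
    by (intro integrable_integral integrable_continuous_real continuous_intros)
  have "- c y * phi y - t * (- (c y - \<delta>) * v y) \<le> ?G y" if "y \<in> {p..q}" for y
  proof -
    have "- c y * phi y - t * (- (c y - \<delta>) * v y) = - c y * (phi y - t * v y) - t * \<delta> * v y"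
      by (simp add: algebra_simps)
    also have "\<dots> \<le> \<bar>c y\<bar> * \<bar>phi y - t * v y\<bar> - t * \<delta> * v y"
      by (simp add: abs_mult[symmetric] abs_le_iff)
    also have "\<dots> \<le> ?G y" using B that assms(4-6) by (simp add: mult_right_mono)
    finally show ?thesis .
  qed
  then have "I - t * (dv q - dv p) \<le> integral {p..q} ?G" using has_integral_le[OF Idiff IG] by blast
  with I(2) IG show ?thesis by (intro exI[of _ "integral {p..q} ?G"]) argo
qed

text \<open>If v exceeds phi somewhere, scale it down by the largest ratio v/phi: the difference
  w = phi - t v is then nonnegative with an interior zero x0, whereas w'' \<le> B |w| - t \<delta> v,
  which is negative near x0.\<close>
lemma weak_solution_le_supersolution:
  assumes phi: "weak_supersolution c phi dphi" "\<forall>y. 0 < phi y"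
    and v: "weak_solution_on (\<lambda>y. c y - \<delta>) v dv {lo..hi}" and "0 < \<delta>"
    and B: "\<forall>y\<in>{lo..hi}. \<bar>c y\<bar> \<le> B"
    and ends: "v lo \<le> phi lo" "v hi \<le> phi hi" and "y \<in> {lo..hi}"
  shows "v y \<le> phi y"
proof (rule ccontr)
  assume "\<not> v y \<le> phi y"
  have cv: "continuous_on {lo..hi} v"
    using v unfolding weak_solution_on_def by (meson DERIV_isCont continuous_at_imp_continuous_on)
  moreover have cphi: "continuous_on {lo..hi} phi"
    using phi(1) unfolding weak_supersolution_def by (meson DERIV_isCont continuous_at_imp_continuous_on)
  ultimately have "continuous_on {lo..hi} (\<lambda>y. v y / phi y)"
    using phi(2) by (intro continuous_on_divide) (metis less_irrefl)+
  moreover have "{lo..hi} \<noteq> {}" using \<open>y \<in> {lo..hi}\<close> by blast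
  ultimately obtain x0 where x0: "x0 \<in> {lo..hi}" "\<forall>y\<in>{lo..hi}. v y / phi y \<le> v x0 / phi x0"
    using continuous_attains_sup[OF compact_Icc] by blast
  have "1 < v y / phi y" using \<open>\<not> v y \<le> phi y\<close> phi(2) by (simp add: less_divide_eq)
  then have "1 < v x0 / phi x0" using x0 \<open>y \<in> {lo..hi}\<close> by force
  then have vx0: "phi x0 < v x0" using phi(2) by (simp add: less_divide_eq)
  have v_pos: "0 < v x0" using vx0 phi(2) by (meson less_trans)
  define t where "t = phi x0 / v x0"
  define w where "w = (\<lambda>y. phi y - t * v y)"
  define G where "G = (\<lambda>y. B * \<bar>w y\<bar> - t * \<delta> * v y)"
  have "0 < t" using v_pos phi(2) unfolding t_def by simp
  have "w x0 = 0" using v_pos unfolding w_def t_def by simp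
  moreover have "w x0 \<noteq> 0"
  proof (rule strong_minimum_principle[of lo x0 hi w "\<lambda>y. dphi y - t * dv y" G])
    show "lo < x0" "x0 < hi" using x0(1) vx0 ends by (auto simp: order.order_iff_strict)
    show "\<forall>z\<in>{lo..hi}. 0 \<le> w z"
    proof
      fix z assume "z \<in> {lo..hi}"
      then have "v z / phi z \<le> v x0 / phi x0" using x0 by auto
      then show "0 \<le> w z" using phi(2) v_pos unfolding w_def t_def by (simp add: field_simps)
    qed
    show "\<forall>z\<in>{lo..hi}. (w has_real_derivative dphi z - t * dv z) (at z)"
      using phi(1) v unfolding w_def weak_supersolution_def weak_solution_on_def
      by (auto intro!: derivative_eq_intros)
    show "continuous_on {x0..hi} G"
      using cv cphi x0(1) unfolding G_def w_def
      by (intro continuous_intros) (auto intro: continuous_on_subset)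
    show "G x0 < 0" using \<open>w x0 = 0\<close> \<open>0 < t\<close> \<open>0 < \<delta>\<close> v_pos unfolding G_def by simp
    show "\<forall>x\<in>{x0<..hi}. \<exists>I. (G has_integral I) {x0..x} \<and> (dphi x - t * dv x) - (dphi x0 - t * dv x0) \<le> I"
      using weak_supersolution_diff_bound[OF phi(1) v B] x0(1) unfolding G_def w_def by auto
  qed
  ultimately show False by contradiction
qed

lemma no_positive_weak_supersolution_oscillating:
  assumes phi: "weak_supersolution c phi dphi" "\<forall>y. 0 < phi y"
    and om: "0 < om" "om\<^sup>2 < k" and c: "\<forall>y\<in>{Y..Y + pi / om}. c y = k"
  shows False
proof -
  define K where "K = phi (Y + pi / (2 * om)) + 1"
  define v where "v = (\<lambda>y. K * sin (om * (y - Y)))"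
  define dv where "dv = (\<lambda>y. K * om * cos (om * (y - Y)))"
  have "weak_solution_on (\<lambda>_. om\<^sup>2) v dv {Y..Y + pi / om}"
    by (rule weak_solution_on_const_coeff) (unfold v_def dv_def,
        auto intro!: derivative_eq_intros simp: power2_eq_square algebra_simps)
  then have sol: "weak_solution_on (\<lambda>y. c y - (k - om\<^sup>2)) v dv {Y..Y + pi / om}"
    by (rule weak_solution_on_coeff_cong[of _ _ _ _ "{}"]) (use c in auto)
  have "v (Y + pi / (2 * om)) \<le> phi (Y + pi / (2 * om))"
  proof (rule weak_solution_le_supersolution[OF phi sol])
    show "0 < k - om\<^sup>2" using om by simp
    show "\<forall>y\<in>{Y..Y + pi / om}. \<bar>c y\<bar> \<le> \<bar>k\<bar>" using c by simp
    show "v Y \<le> phi Y" "v (Y + pi / om) \<le> phi (Y + pi / om)"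
      using phi(2) om by (auto simp: v_def less_imp_le)
    show "Y + pi / (2 * om) \<in> {Y..Y + pi / om}" using om by (auto simp: field_simps)
  qed
  moreover have "v (Y + pi / (2 * om)) = K" using om by (simp add: v_def)
  ultimately show False unfolding K_def by simp
qed

text \<open>The witness v vanishes at Y, stays below phi at 0, and Y is placed so that
  v y = phi 0 exp (a y) / 2.\<close>
lemma weak_supersolution_exp_lower_bound:
  assumes phi: "weak_supersolution c phi dphi" "\<forall>y. 0 < phi y"
    and c: "\<forall>y<0. c y = k" and a: "0 < a" "- k < a\<^sup>2" and "y \<le> 0"
  shows "phi 0 / 2 * exp (a * y) \<le> phi y"
proof -
  define Y where "Y = y - ln 2 / (2 * a)"
  define v where "v = (\<lambda>z. phi 0 * (exp (a * z) - exp (a * (2 * Y - z))))"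
  define dv where "dv = (\<lambda>z. phi 0 * a * (exp (a * z) + exp (a * (2 * Y - z))))"
  have "Y < y" using a by (simp add: Y_def)
  have "weak_solution_on (\<lambda>_. - a\<^sup>2) v dv {Y..0}"
    by (rule weak_solution_on_const_coeff) (unfold v_def dv_def,
        auto intro!: derivative_eq_intros simp: power2_eq_square algebra_simps)
  then have sol: "weak_solution_on (\<lambda>z. c z - (k + a\<^sup>2)) v dv {Y..0}"
    by (rule weak_solution_on_coeff_cong[of _ _ _ _ "{0}"]) (use c in auto)
  have "v y \<le> phi y"
  proof (rule weak_solution_le_supersolution[OF phi sol])
    show "0 < k + a\<^sup>2" using a by simp
    show "\<forall>z\<in>{Y..0}. \<bar>c z\<bar> \<le> \<bar>k\<bar> + \<bar>c 0\<bar>"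
      using c by (metis abs_ge_zero add.commute add_increasing2 atLeastAtMost_iff dual_order.refl
          le_add_same_cancel1 order_less_le)
    show "v Y \<le> phi Y" using phi(2) by (simp add: v_def less_imp_le)
    show "v 0 \<le> phi 0" using phi(2) by (simp add: v_def mult_le_cancel_left1)
    show "y \<in> {Y..0}" using \<open>Y < y\<close> \<open>y \<le> 0\<close> by simp
  qed
  moreover have "exp (a * (2 * Y - y)) = exp (a * y) / 2"
    using a by (simp add: Y_def algebra_simps exp_diff)
  then have "v y = phi 0 / 2 * exp (a * y)" by (simp add: v_def)
  ultimately show ?thesis by simp
qed

lemma weak_supersolution_exp_lower_bound_right:
  assumes phi: "weak_supersolution c phi dphi" "\<forall>y. 0 < phi y"
    and c: "\<forall>y>1. c y = k" and b: "0 < b" "- k < b\<^sup>2" and "1 \<le> y"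
  shows "phi 1 / 2 * exp (b * (1 - y)) \<le> phi y"
proof -
  have "\<forall>z<0. c (1 - z) = k" using c by simp
  from weak_supersolution_exp_lower_bound[OF weak_supersolution_reflect[OF phi(1)] _ this b, of "1 - y"]
  show ?thesis using phi(2) \<open>1 \<le> y\<close> by simp
qed

lemma exp_dominated_at_bot:
  fixes a a' e C :: real
  assumes "a' < a" "0 < e"
  shows "\<exists>y0. \<forall>y\<le>y0. C * exp (a * y) \<le> e * exp (a' * y)"
proof -
  have "filterlim (\<lambda>y. (a - a') * y) at_bot at_bot"
    using assms(1) by (intro filterlim_tendsto_pos_mult_at_bot[OF tendsto_const _ filterlim_ident]) simp
  then have "((\<lambda>y. C * exp ((a - a') * y)) \<longlongrightarrow> C * 0) at_bot"
    by (intro tendsto_mult tendsto_const filterlim_compose[OF exp_at_bot])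
  then have "eventually (\<lambda>y. C * exp ((a - a') * y) < e) at_bot"
    using assms(2) by (intro order_tendstoD(2)) simp_all
  then obtain y0 where y0: "\<forall>y\<le>y0. C * exp ((a - a') * y) < e"
    by (auto simp: eventually_at_bot_linorder)
  have "C * exp (a * y) \<le> e * exp (a' * y)" if "y \<le> y0" for y
  proof -
    have "C * exp (a * y) = C * exp ((a - a') * y) * exp (a' * y)"
      by (simp add: algebra_simps flip: exp_add)
    also have "\<dots> \<le> e * exp (a' * y)" using y0 that by (intro mult_right_mono) auto
    finally show ?thesis .
  qed
  then show ?thesis by blast
qed

lemma exists_smaller_root:
  fixes a m :: real
  assumes "0 < a" "m < a\<^sup>2"
  obtains a' where "0 < a'" "a' < a" "m < a'\<^sup>2"
proof
  define s where "s = (max 0 m + a\<^sup>2) / 2"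
  have s: "0 < s" "s < a\<^sup>2" "m < s" using assms unfolding s_def by (auto simp: max_def)
  show "0 < sqrt s" using s by simp
  show "sqrt s < a" using s assms real_less_rsqrt by (metis abs_of_pos real_sqrt_abs real_sqrt_less_iff)
  show "m < (sqrt s)\<^sup>2" using s by simp
qed

text \<open>phi decays at most like exp (a' y) with a' < a, so a large multiple K psi with
  K psi 0 > phi 0 still lies below phi far out on both sides; comparison on the interval in between
  yields K psi 0 \<le> phi 0.\<close>
lemma no_weak_supersolution_above_decaying_solution:
  assumes phi: "weak_supersolution c phi dphi" "\<forall>y. 0 < phi y"
    and psi: "weak_solution_on (\<lambda>y. c y - \<delta>) psi dpsi UNIV" "0 < psi 0"
    and "0 < \<delta>" and B: "\<forall>y. \<bar>c y\<bar> \<le> B"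
    and left: "\<forall>y<0. c y = k1" "0 < a" "- k1 < a\<^sup>2" "\<forall>y<0. psi y \<le> A * exp (a * y)"
    and right: "\<forall>y>1. c y = k3" "0 < b" "- k3 < b\<^sup>2" "\<forall>y>1. psi y \<le> C * exp (- b * (y - 1))"
  shows False
proof -
  obtain a' where a': "0 < a'" "a' < a" "- k1 < a'\<^sup>2" using exists_smaller_root[OF left(2,3)] .
  obtain b' where b': "0 < b'" "b' < b" "- k3 < b'\<^sup>2" using exists_smaller_root[OF right(2,3)] .
  have phi_left: "phi 0 / 2 * exp (a' * y) \<le> phi y" if "y \<le> 0" for y
    using weak_supersolution_exp_lower_bound[OF phi left(1) a'(1,3) that] .
  have phi_right: "phi 1 / 2 * exp (b' * (1 - y)) \<le> phi y" if "1 \<le> y" for y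
    using weak_supersolution_exp_lower_bound_right[OF phi right(1) b'(1,3) that] .
  define K where "K = (phi 0 + 1) / psi 0"
  have K: "0 < K" using phi(2) psi(2) by (simp add: K_def add_pos_pos)
  obtain y0 where y0: "\<forall>y\<le>y0. K * A * exp (a * y) \<le> phi 0 / 2 * exp (a' * y)"
    using exp_dominated_at_bot[OF a'(2)] phi(2) by (metis half_gt_zero)
  obtain t0 where t0: "\<forall>t\<le>t0. K * C * exp (b * t) \<le> phi 1 / 2 * exp (b' * t)"
    using exp_dominated_at_bot[OF b'(2)] phi(2) by (metis half_gt_zero)
  define lo where "lo = min y0 (-1)"
  define hi where "hi = 1 - min t0 (-1)"
  have "K * psi 0 \<le> phi 0"
  proof (rule weak_solution_le_supersolution[OF phi])
    show "weak_solution_on (\<lambda>y. c y - \<delta>) (\<lambda>y. K * psi y) (\<lambda>y. K * dpsi y) {lo..hi}"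
      by (rule weak_solution_on_subset[OF weak_solution_on_cmult[OF psi(1)]]) simp
    show "0 < \<delta>" by fact
    show "\<forall>y\<in>{lo..hi}. \<bar>c y\<bar> \<le> B" using B by simp
    have "lo < 0" by (simp add: lo_def)
    then have "K * psi lo \<le> K * (A * exp (a * lo))"
      using left(4) K by (simp add: mult_left_mono)
    also have "\<dots> \<le> phi 0 / 2 * exp (a' * lo)"
      using y0[rule_format, of lo] by (simp add: lo_def mult.assoc)
    also have "\<dots> \<le> phi lo" using phi_left \<open>lo < 0\<close> by simp
    finally show "K * psi lo \<le> phi lo" .
    have "1 < hi" by (simp add: hi_def)
    then have "psi hi \<le> C * exp (- b * (hi - 1))" using right(4) by blast
    then have "K * psi hi \<le> K * (C * exp (b * (1 - hi)))"
      using K by (simp add: algebra_simps)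
    also have "\<dots> \<le> phi 1 / 2 * exp (b' * (1 - hi))"
      using t0[rule_format, of "1 - hi"] by (simp add: hi_def mult.assoc)
    also have "\<dots> \<le> phi hi" using phi_right \<open>1 < hi\<close> by simp
    finally show "K * psi hi \<le> phi hi" .
    show "0 \<in> {lo..hi}" using \<open>lo < 0\<close> \<open>1 < hi\<close> by simp
  qed
  then show False using psi(2) by (simp add: K_def)
qed

lemma trig_combination_pos:
  fixes k A y :: real
  assumes "0 < k" "k < pi" "0 < cos k + A * sin k" "0 \<le> y" "y < 1"
  shows "0 < cos (k * y) + A * sin (k * y)"
proof (cases "y = 0")
  case False
  have "0 < k * y" "k * y < k" using assms(1,4,5) False by auto
  then have "0 < sin (k - k * y)" "0 < sin (k * y)" using assms(2) by (auto intro: sin_gt_zero)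
  then have "0 < sin (k - k * y) + sin (k * y) * (cos k + A * sin k)" using assms(3) by (simp add: add_pos_pos)
  also have "\<dots> = (cos (k * y) + A * sin (k * y)) * sin k" by (simp add: sin_diff algebra_simps)
  finally show ?thesis using assms(1,2) sin_gt_zero[of k] by (simp add: zero_less_mult_iff)
qed simp

lemma cot_strict_antimono:
  fixes x y :: real
  assumes "0 < x" "x < y" "y < pi"
  shows "cot y < cot x"
proof -
  have "0 < sin x" "0 < sin y" "0 < sin (y - x)" using assms by (auto intro: sin_gt_zero)
  then show ?thesis unfolding cot_def by (simp add: sin_diff field_simps)
qed

lemma cot_antimono:
  fixes x y :: real
  assumes "0 < x" "x \<le> y" "y < pi"
  shows "cot y \<le> cot x"
  using cot_strict_antimono[of x y] assms by (cases "x = y") auto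

lemma arccot_of_pos:
  fixes t :: real
  assumes "0 < t"
  shows "0 < arccot t" "arccot t < pi / 2" "cot (arccot t) = t"
proof -
  define s where "s = arctan (1 / t)"
  have s: "0 < s" "s < pi / 2" "cot s = t"
    using assms arctan_ubound unfolding s_def cot_altdef tan_arctan by auto
  have "arccot t = s"
    unfolding arccot_def
  proof (rule the_equality)
    fix u assume u: "0 < u \<and> u < pi \<and> cot u = t"
    show "u = s"
      using cot_strict_antimono[of u s] cot_strict_antimono[of s u] u s by (cases u s rule: linorder_cases) auto
  qed (use s in auto)
  then show "0 < arccot t" "arccot t < pi / 2" "cot (arccot t) = t" using s by auto
qed

lemma L_sqrt_less_pi:
  assumes "0 < L" "0 \<le> r + x" "x < pi\<^sup>2 / L\<^sup>2 - r"
  shows "L * sqrt (r + x) < pi"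
proof -
  have "(L * sqrt (r + x))\<^sup>2 < pi\<^sup>2"
    using assms by (simp add: power_mult_distrib field_simps)
  then show ?thesis by (rule power_less_imp_less_base) simp
qed

section \<open>Admissible eigenvalues of the three-layer operator\<close>

definition gpe_set :: "real \<Rightarrow> (real \<Rightarrow> real) \<Rightarrow> real set" where
  "gpe_set L m = {lam. \<exists>phi dphi ddphi. W21loc phi dphi ddphi \<and> (\<forall>y. phi y > 0) \<and>
       (AE y in lborel. ddphi y / L\<^sup>2 + m y * phi y + lam * phi y \<le> 0)}"

lemma gen_princ_eig_eq_Sup: "gen_princ_eig L m = Sup (gpe_set L m)"
  unfolding gen_princ_eig_def gpe_set_def ..

lemma mcoef_scale_shift:
  "a * (mcoef r1 r2 r3 y + b) = mcoef (a * (r1 + b)) (a * (r2 + b)) (a * (r3 + b)) y"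
  by (simp add: mcoef_def)

lemma abs_mcoef_le: "\<bar>mcoef r1 r2 r3 y\<bar> \<le> \<bar>r1\<bar> + \<bar>r2\<bar> + \<bar>r3\<bar>"
  by (auto simp: mcoef_def)

lemma mcoef_mult_integrable:
  fixes f :: "real \<Rightarrow> real"
  assumes "continuous_on UNIV f"
  shows "(\<lambda>y. mcoef r1 r2 r3 y * f y) integrable_on {a..b}"
proof -
  have cont: "(\<lambda>y. r * f y) integrable_on {p..q}" for r p q
    using assms by (intro integrable_continuous_real continuous_intros) (auto intro: continuous_on_subset)
  have step: "(\<lambda>y. if y \<in> {p..} then r * f y else 0) integrable_on {a..b}" for p r
  proof -
    have "{p..} \<inter> {a..b} = {max p a..b}" by auto
    then show ?thesis using cont by (intro integrable_restrict_Int[THEN iffD2]) simp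
  qed
  have "(\<lambda>y. mcoef r1 r2 r3 y * f y) = (\<lambda>y. r1 * f y + ((if y \<in> {0..} then (r2 - r1) * f y else 0)
     + (if y \<in> {1..} then (r3 - r2) * f y else 0)))"
    by (auto simp: mcoef_def fun_eq_iff algebra_simps)
  then show ?thesis by (simp only:) (intro integrable_add cont step)
qed

lemma mcoef_weight_integrable:
  fixes f :: "real \<Rightarrow> real"
  assumes "continuous_on UNIV f"
  shows "(\<lambda>y. - (L\<^sup>2 * (mcoef r1 r2 r3 y + lam)) * f y) integrable_on {a..b}"
  using integrable_on_mult_right[OF mcoef_mult_integrable[OF assms], of "-1"]
  by (simp add: mcoef_scale_shift)

lemma weak_supersolution_of_mem_gpe_set:
  assumes "lam \<in> gpe_set L (mcoef r1 r2 r3)" "L \<noteq> 0"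
  obtains phi dphi where "weak_supersolution (\<lambda>y. L\<^sup>2 * (mcoef r1 r2 r3 y + lam)) phi dphi"
    "\<forall>y. 0 < phi y"
proof -
  obtain phi dphi ddphi where W: "W21loc phi dphi ddphi" and pos: "\<forall>y. 0 < phi y"
    and AE: "AE y in lborel. ddphi y / L\<^sup>2 + mcoef r1 r2 r3 y * phi y + lam * phi y \<le> 0"
    using assms(1) unfolding gpe_set_def by auto
  let ?h = "\<lambda>y. - (L\<^sup>2 * (mcoef r1 r2 r3 y + lam)) * phi y"
  have der: "\<forall>x. (phi has_real_derivative dphi x) (at x)" using W unfolding W21loc_def by auto
  have cont: "continuous_on UNIV phi" using der by (meson DERIV_isCont continuous_at_imp_continuous_on)
  obtain N where N: "{y \<in> space lborel. \<not> (ddphi y / L\<^sup>2 + mcoef r1 r2 r3 y * phi y + lam * phi y \<le> 0)} \<subseteq> N"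
    "N \<in> null_sets lborel"
    using AE by (auto elim!: AE_E simp: null_sets_def)
  have "negligible N" using N(2) unfolding negligible_iff_null_sets by (rule null_sets_completionI)
  have le: "ddphi y \<le> ?h y" if "y \<notin> N" for y
  proof -
    have "ddphi y / L\<^sup>2 + mcoef r1 r2 r3 y * phi y + lam * phi y \<le> 0" using N(1) that by auto
    then show ?thesis using assms(2) by (simp add: field_simps)
  qed
  have "\<exists>I. (?h has_integral I) {a..b} \<and> dphi b - dphi a \<le> I" if "a \<le> b" for a b
  proof -
    have hi: "?h integrable_on {a..b}" by (rule mcoef_weight_integrable[OF cont])
    have "(ddphi has_integral (dphi b - dphi a)) {a..b}" using W that unfolding W21loc_def by auto
    then have "((\<lambda>y. min (ddphi y) (?h y)) has_integral (dphi b - dphi a)) {a..b}"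
      by (rule has_integral_spike[OF \<open>negligible N\<close>, rotated]) (use le in \<open>auto simp: min_def\<close>)
    then have "dphi b - dphi a \<le> integral {a..b} ?h"
      by (rule has_integral_le[OF _ integrable_integral[OF hi]]) auto
    then show ?thesis using hi by blast
  qed
  then show ?thesis using that pos der unfolding weak_supersolution_def by auto
qed

lemma mem_gpe_set_of_weak_solution:
  assumes "L \<noteq> 0" "\<forall>y. 0 < psi y"
    and sol: "weak_solution_on (\<lambda>y. L\<^sup>2 * (mcoef r1 r2 r3 y + lam)) psi dpsi UNIV"
  shows "lam \<in> gpe_set L (mcoef r1 r2 r3)"
proof -
  define ddpsi where "ddpsi = (\<lambda>y. - (L\<^sup>2 * (mcoef r1 r2 r3 y + lam)) * psi y)"
  have der: "\<forall>x. (psi has_real_derivative dpsi x) (at x)"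
    using sol unfolding weak_solution_on_def by auto
  have cont: "continuous_on UNIV psi" using der by (meson DERIV_isCont continuous_at_imp_continuous_on)
  have "ddpsi absolutely_integrable_on {a..b}" for a b
  proof -
    obtain C where C: "\<forall>y\<in>{a..b}. \<bar>psi y\<bar> \<le> C"
      using compact_imp_bounded[OF compact_continuous_image[OF continuous_on_subset[OF cont] compact_Icc]]
      unfolding bounded_iff by (auto simp: image_iff) blast
    define K where "K = L\<^sup>2 * (\<bar>r1\<bar> + \<bar>r2\<bar> + \<bar>r3\<bar> + \<bar>lam\<bar>) * C"
    show ?thesis
    proof (rule absolutely_integrable_integrable_bound[where g="\<lambda>_. K"])
      show "norm (ddpsi y) \<le> K" if "y \<in> {a..b}" for y
      proof -
        have "norm (ddpsi y) = L\<^sup>2 * \<bar>mcoef r1 r2 r3 y + lam\<bar> * \<bar>psi y\<bar>"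
          unfolding ddpsi_def by (simp add: abs_mult)
        also have "\<dots> \<le> K"
          unfolding K_def using abs_mcoef_le[of r1 r2 r3 y] C that
          by (intro mult_mono mult_left_mono) auto
        finally show ?thesis .
      qed
      show "ddpsi integrable_on {a..b}" unfolding ddpsi_def by (rule mcoef_weight_integrable[OF cont])
    qed (rule integrable_const_ivl)
  qed
  then have "W21loc psi dpsi ddpsi"
    using sol unfolding W21loc_def weak_solution_on_def ddpsi_def by auto
  moreover have "ddpsi y / L\<^sup>2 + mcoef r1 r2 r3 y * psi y + lam * psi y \<le> 0" for y
    using assms(1) by (simp add: ddpsi_def field_simps)
  ultimately show ?thesis using assms(2) unfolding gpe_set_def by (intro CollectI exI[of _ psi] exI[of _ dpsi] exI[of _ ddpsi]) auto
qed

lemma gpe_set_le_neg_max: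
  assumes "0 < L" "lam \<in> gpe_set L (mcoef r1 r2 r3)"
  shows "lam \<le> - max r1 r3"
proof (rule ccontr)
  assume "\<not> lam \<le> - max r1 r3"
  obtain phi dphi where phi: "weak_supersolution (\<lambda>y. L\<^sup>2 * (mcoef r1 r2 r3 y + lam)) phi dphi"
    "\<forall>y. 0 < phi y"
    using weak_supersolution_of_mem_gpe_set[OF assms(2)] assms(1) by (metis less_irrefl)
  have oscillating: False
    if "- r < lam" "\<And>y. y \<in> {Y..Y + pi / (L * sqrt (r + lam) / 2)} \<Longrightarrow> mcoef r1 r2 r3 y = r" for r Y
  proof (rule no_positive_weak_supersolution_oscillating[OF phi, where Y=Y])
    show "0 < L * sqrt (r + lam) / 2" using that(1) assms(1) by simp
    show "(L * sqrt (r + lam) / 2)\<^sup>2 < L\<^sup>2 * (r + lam)"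
      using that(1) assms(1) by (simp add: power_divide power_mult_distrib)
  qed (use that(2) in auto)
  consider "- r1 < lam" | "- r3 < lam" using \<open>\<not> lam \<le> - max r1 r3\<close> by linarith
  then show False
  proof cases
    case 1
    show False by (rule oscillating[OF 1, of "- pi / (L * sqrt (r1 + lam) / 2) - 1"]) (simp add: mcoef_def)
  next
    case 2
    show False by (rule oscillating[OF 2, of 2]) (simp add: mcoef_def)
  qed
qed

lemma weak_solution_on_mcoef_reflect:
  assumes "weak_solution_on (mcoef k3 k2 k1) u du UNIV"
  shows "weak_solution_on (mcoef k1 k2 k3) (\<lambda>y. u (1 - y)) (\<lambda>y. - du (1 - y)) UNIV"
  by (rule weak_solution_on_coeff_cong[OF weak_solution_on_reflect[OF assms], of "{0, 1}"])
    (auto simp: mcoef_def)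

text \<open>The dispersion relation is exactly the C^1 matching of the three pieces at y = 1.\<close>
lemma mcoef_decaying_eigenfunction:
  assumes "0 < a" "0 < b" "0 < k" "k < pi"
    and disp: "cos k * (k * (a + b)) = (k\<^sup>2 - a * b) * sin k"
  obtains psi dpsi C where "\<forall>y. 0 < psi y" "weak_solution_on (mcoef (- a\<^sup>2) (k\<^sup>2) (- b\<^sup>2)) psi dpsi UNIV"
    "\<forall>y<0. psi y = exp (a * y)" "\<forall>y>1. psi y = C * exp (- b * (y - 1))"
proof -
  define C where "C = cos k + a / k * sin k"
  have sin_k: "0 < sin k" using assms by (intro sin_gt_zero)
  have disp': "a * k * cos k + b * k * cos k = k * k * sin k - a * b * sin k"
    using disp by (simp add: algebra_simps power2_eq_square)
  have kC: "k * C = k * cos k + a * sin k" using assms(3) unfolding C_def by (simp add: field_simps)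
  have "C * (k * (a + b)) = (k\<^sup>2 + a\<^sup>2) * sin k"
  proof -
    have "C * (k * (a + b)) = (a + b) * (k * C)" by (simp add: algebra_simps)
    also have "\<dots> = (a * k * cos k + b * k * cos k) + (a * a + a * b) * sin k"
      unfolding kC by (simp add: algebra_simps)
    finally show ?thesis unfolding disp' by (simp add: algebra_simps power2_eq_square)
  qed
  moreover have "0 < (k\<^sup>2 + a\<^sup>2) * sin k" "0 < k * (a + b)"
    using sin_k assms by (simp_all add: add_pos_pos)
  ultimately have "0 < C" by (metis zero_less_mult_pos2)
  define f2 where "f2 = (\<lambda>y. cos (k * y) + a / k * sin (k * y))"
  have f2_pos: "0 < f2 y" if "0 \<le> y" "y < 1" for y
    using trig_combination_pos[OF assms(3,4)] \<open>0 < C\<close> that unfolding f2_def C_def by blast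
  define psi where "psi = (\<lambda>y. if y < 0 then exp (a * y) else if y < 1 then f2 y
    else C * exp (- b * (y - 1)))"
  define dpsi where "dpsi = (\<lambda>y. if y < 0 then a * exp (a * y)
    else if y < 1 then - k * sin (k * y) + a * cos (k * y) else - b * C * exp (- b * (y - 1)))"
  have "weak_solution_on (mcoef (- a\<^sup>2) (k\<^sup>2) (- b\<^sup>2)) psi dpsi UNIV"
    unfolding psi_def dpsi_def
  proof (rule weak_solution_on_mcoef_glue)
    have "k * (- b * C) = - b * (k * C)" by (simp add: algebra_simps)
    also have "\<dots> = - (b * k * cos k) - a * b * sin k" unfolding kC by (simp add: algebra_simps)
    finally have "k * (- k * sin k + a * cos k) = k * (- b * C)"
      using disp' by (simp add: algebra_simps)
    then have "- k * sin k + a * cos k = - b * C" using assms(3) by (metis less_irrefl mult_left_cancel)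
    then show "- k * sin (k * 1) + a * cos (k * 1) = - b * C * exp (- b * (1 - 1))" by simp
  qed (use assms(3) in \<open>auto intro!: derivative_eq_intros simp: f2_def C_def power2_eq_square algebra_simps\<close>)
  moreover have "0 < psi y" for y
    using f2_pos \<open>0 < C\<close> by (simp add: psi_def)
  ultimately show ?thesis by (intro that[of psi dpsi C]) (auto simp: psi_def f2_def)
qed

text \<open>The hypothesis k sin k \<le> b cos k makes the coefficient P of the growing exponential on
  y > 1 nonnegative.\<close>
lemma mcoef_positive_solution_zero_left:
  assumes "0 < b" "0 < k" "k < pi / 2" "k * sin k \<le> b * cos k"
  obtains psi dpsi where "\<forall>y. 0 < psi y" "weak_solution_on (mcoef 0 (k\<^sup>2) (- b\<^sup>2)) psi dpsi UNIV"
proof -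
  define P where "P = (cos k - k / b * sin k) / 2"
  define Q where "Q = (cos k + k / b * sin k) / 2"
  have "0 < sin k" "0 < cos k" using assms by (auto intro: sin_gt_zero cos_gt_zero_pi)
  then have PQ: "0 \<le> P" "0 < Q"
    using assms unfolding P_def Q_def by (auto simp: field_simps intro: add_pos_pos)
  define psi where "psi = (\<lambda>y. if y < 0 then 1 else if y < 1 then cos (k * y)
    else P * exp (b * (y - 1)) + Q * exp (- b * (y - 1)))"
  define dpsi where "dpsi = (\<lambda>y. if y < 0 then 0 else if y < 1 then - k * sin (k * y)
    else b * P * exp (b * (y - 1)) - b * Q * exp (- b * (y - 1)))"
  have "weak_solution_on (mcoef 0 (k\<^sup>2) (- b\<^sup>2)) psi dpsi UNIV"
    unfolding psi_def dpsi_def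
    by (rule weak_solution_on_mcoef_glue)
      (use assms(1) in \<open>auto intro!: derivative_eq_intros simp: P_def Q_def power2_eq_square field_simps\<close>)
  moreover have "0 < cos (k * y)" if "0 \<le> y" "y < 1" for y
  proof -
    have "k * y \<le> k" using that assms(2) by (simp add: mult_left_le)
    moreover have "0 \<le> k * y" using that assms(2) by simp
    ultimately have "- (pi / 2) < k * y" "k * y < pi / 2" using assms(3) by linarith+
    then show ?thesis by (rule cos_gt_zero_pi)
  qed
  then have "0 < psi y" for y
    using PQ by (simp add: psi_def add_nonneg_pos)
  ultimately show ?thesis by (intro that[of psi dpsi]) auto
qed

lemma positive_weak_solution_at_neg_r1:
  assumes "0 < L" "r3 < r1" "r1 < r2"
    and "L * sqrt (r2 - r1) \<le> arccot (sqrt ((r2 - r1) / (r1 - r3)))"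
  obtains psi dpsi where "\<forall>y. 0 < psi y"
    "weak_solution_on (mcoef 0 (L\<^sup>2 * (r2 - r1)) (L\<^sup>2 * (r3 - r1))) psi dpsi UNIV"
proof -
  define k where "k = L * sqrt (r2 - r1)"
  define b where "b = L * sqrt (r1 - r3)"
  have kb: "0 < k" "0 < b" using assms unfolding k_def b_def by auto
  have "sqrt ((r2 - r1) / (r1 - r3)) = k / b"
    using assms(1) unfolding k_def b_def by (simp add: real_sqrt_divide)
  then have "k \<le> arccot (k / b)" using assms(4) unfolding k_def by simp
  moreover note arccot = arccot_of_pos[of "k / b"]
  ultimately have "k < pi / 2" "k / b \<le> cot k"
    using kb cot_antimono[of k "arccot (k / b)"] by auto
  moreover have "0 < sin k" using kb \<open>k < pi / 2\<close> by (intro sin_gt_zero) auto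
  ultimately have "k * sin k \<le> b * cos k" using kb by (simp add: cot_def field_simps)
  moreover have "k\<^sup>2 = L\<^sup>2 * (r2 - r1)" "- b\<^sup>2 = L\<^sup>2 * (r3 - r1)"
    using assms unfolding k_def b_def by (simp_all add: power_mult_distrib algebra_simps)
  ultimately show ?thesis using mcoef_positive_solution_zero_left kb \<open>k < pi / 2\<close> that by metis
qed

text \<open>The case r1 < r3 reduces to r3 < r1 by the reflection y \<mapsto> 1 - y.\<close>
lemma neg_max_mem_gpe_set:
  assumes "0 < L" "max r1 r3 < r2" "L \<le> Lunder r1 r2 r3"
  shows "- max r1 r3 \<in> gpe_set L (mcoef r1 r2 r3)"
proof -
  have "r1 \<noteq> r3" using assms unfolding Lunder_def by auto
  have edge: "L * sqrt (r2 - r) \<le> arccot (sqrt ((r2 - r) / (r - r')))"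
    if "max r1 r3 = r" "\<bar>r1 - r3\<bar> = r - r'" for r r'
  proof -
    have "L \<le> arccot (sqrt ((r2 - r) / (r - r'))) / sqrt (r2 - r)"
      using assms(3) \<open>r1 \<noteq> r3\<close> that unfolding Lunder_def by simp
    moreover have "0 < sqrt (r2 - r)" using assms(2) that(1) by simp
    ultimately show ?thesis by (simp add: pos_le_divide_eq)
  qed
  consider "r3 < r1" | "r1 < r3" using \<open>r1 \<noteq> r3\<close> by linarith
  then obtain psi dpsi where "\<forall>y. 0 < psi y"
    "weak_solution_on (\<lambda>y. L\<^sup>2 * (mcoef r1 r2 r3 y + - max r1 r3)) psi dpsi UNIV"
  proof cases
    case 1
    then have "max r1 r3 = r1" "\<bar>r1 - r3\<bar> = r1 - r3" by auto
    with edge[OF this] assms(2) obtain psi dpsi where "\<forall>y. 0 < psi y"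
      "weak_solution_on (mcoef 0 (L\<^sup>2 * (r2 - r1)) (L\<^sup>2 * (r3 - r1))) psi dpsi UNIV"
      using positive_weak_solution_at_neg_r1[OF assms(1) 1] by auto
    moreover have "(\<lambda>y. L\<^sup>2 * (mcoef r1 r2 r3 y + - max r1 r3)) = mcoef 0 (L\<^sup>2 * (r2 - r1)) (L\<^sup>2 * (r3 - r1))"
      using \<open>max r1 r3 = r1\<close> by (simp add: fun_eq_iff mcoef_def)
    ultimately show ?thesis by (intro that[of psi dpsi]) simp_all
  next
    case 2
    then have "max r1 r3 = r3" "\<bar>r1 - r3\<bar> = r3 - r1" by auto
    with edge[OF this] assms(2) obtain psi dpsi where "\<forall>y. 0 < psi y"
      "weak_solution_on (mcoef 0 (L\<^sup>2 * (r2 - r3)) (L\<^sup>2 * (r1 - r3))) psi dpsi UNIV"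
      using positive_weak_solution_at_neg_r1[OF assms(1) 2] by auto
    moreover have "(\<lambda>y. L\<^sup>2 * (mcoef r1 r2 r3 y + - max r1 r3)) = mcoef (L\<^sup>2 * (r1 - r3)) (L\<^sup>2 * (r2 - r3)) 0"
      using \<open>max r1 r3 = r3\<close> by (simp add: fun_eq_iff mcoef_def)
    ultimately show ?thesis
      using weak_solution_on_mcoef_reflect by (intro that[of "\<lambda>y. psi (1 - y)" "\<lambda>y. - dpsi (1 - y)"]) auto
  qed
  then show ?thesis using assms(1) by (intro mem_gpe_set_of_weak_solution) auto
qed

lemma Fdisp_eq_zero_imp_dispersion_relation:
  fixes L r1 r2 r3 lam :: real
  defines "k \<equiv> L * sqrt (r2 + lam)" and "a \<equiv> L * sqrt (- r1 - lam)" and "b \<equiv> L * sqrt (- r3 - lam)"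
  assumes "- r2 < lam" "lam < - r1" "lam < - r3" "sin k \<noteq> 0" "Fdisp r1 r2 r3 L lam = 0"
  shows "cos k * (k * (a + b)) = (k\<^sup>2 - a * b) * sin k"
proof -
  define s where "s = sqrt (r2 + lam)"
  define al where "al = sqrt (- r1 - lam)"
  define be where "be = sqrt (- r3 - lam)"
  have pos: "0 < s" "0 < al" "0 < be" using assms unfolding s_def al_def be_def by auto
  have "sqrt ((r1 + lam) * (r3 + lam)) = al * be"
    unfolding al_def be_def by (simp add: real_sqrt_mult[symmetric] algebra_simps)
  moreover have "r2 + lam = s\<^sup>2" using assms unfolding s_def by simp
  ultimately have "cos k / sin k = (s\<^sup>2 - al * be) / (s * (al + be))"
    using assms(8) unfolding Fdisp_def cot_def k_def s_def al_def be_def by simp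
  moreover have "s * (al + be) \<noteq> 0" using pos by simp
  ultimately have "cos k * (s * (al + be)) = (s\<^sup>2 - al * be) * sin k"
    using assms(7) by (simp add: frac_eq_eq)
  then have "L\<^sup>2 * (cos k * (s * (al + be))) = L\<^sup>2 * ((s\<^sup>2 - al * be) * sin k)" by simp
  then show ?thesis
    unfolding k_def a_def b_def s_def[symmetric] al_def[symmetric] be_def[symmetric]
    by (simp add: algebra_simps power2_eq_square)
qed

lemma gen_princ_eig_eq_neg_max:
  assumes "0 < L" "max r1 r3 < r2" "L \<le> Lunder r1 r2 r3"
  shows "gen_princ_eig L (mcoef r1 r2 r3) = - max r1 r3"
  unfolding gen_princ_eig_eq_Sup
  using neg_max_mem_gpe_set[OF assms] gpe_set_le_neg_max[OF assms(1)] by (rule cSup_eq_maximum)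

lemma positive_eigenfunction_of_Fdisp_zero:
  assumes "0 < L" and lam: "lam \<in> {-r2<..<lam_bar r1 r2 r3 L}" "Fdisp r1 r2 r3 L lam = 0"
  obtains psi dpsi C where "\<forall>y. 0 < psi y"
    "weak_solution_on (\<lambda>y. L\<^sup>2 * (mcoef r1 r2 r3 y + lam)) psi dpsi UNIV"
    "\<forall>y<0. psi y = exp (L * sqrt (- r1 - lam) * y)"
    "\<forall>y>1. psi y = C * exp (- (L * sqrt (- r3 - lam)) * (y - 1))"
proof -
  have range: "- r2 < lam" "lam < - r1" "lam < - r3" "lam < pi\<^sup>2 / L\<^sup>2 - r2"
    using lam(1) unfolding lam_bar_def by auto
  define k where "k = L * sqrt (r2 + lam)"
  define a where "a = L * sqrt (- r1 - lam)"
  define b where "b = L * sqrt (- r3 - lam)"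
  have pos: "0 < a" "0 < b" "0 < k" "k < pi"
    using assms(1) range L_sqrt_less_pi[OF assms(1) _ range(4)] unfolding a_def b_def k_def by auto
  then have "sin k \<noteq> 0" using sin_gt_zero by fastforce
  with range lam(2) have "cos k * (k * (a + b)) = (k\<^sup>2 - a * b) * sin k"
    unfolding k_def a_def b_def by (intro Fdisp_eq_zero_imp_dispersion_relation)
  then obtain psi dpsi C where psi: "\<forall>y. 0 < psi y"
    "weak_solution_on (mcoef (- a\<^sup>2) (k\<^sup>2) (- b\<^sup>2)) psi dpsi UNIV"
    "\<forall>y<0. psi y = exp (a * y)" "\<forall>y>1. psi y = C * exp (- b * (y - 1))"
    using mcoef_decaying_eigenfunction[OF pos] by blast
  have "- a\<^sup>2 = L\<^sup>2 * (r1 + lam)" "k\<^sup>2 = L\<^sup>2 * (r2 + lam)" "- b\<^sup>2 = L\<^sup>2 * (r3 + lam)"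
    using range unfolding a_def b_def k_def by (simp_all add: power_mult_distrib algebra_simps)
  then have "mcoef (- a\<^sup>2) (k\<^sup>2) (- b\<^sup>2) = (\<lambda>y. L\<^sup>2 * (mcoef r1 r2 r3 y + lam))"
    by (simp add: mcoef_scale_shift)
  with psi show ?thesis by (intro that[of psi dpsi C]) (simp_all add: a_def b_def)
qed

lemma gen_princ_eig_eq_Fdisp_zero:
  assumes "0 < L" and lam: "lam \<in> {-r2<..<lam_bar r1 r2 r3 L}" "Fdisp r1 r2 r3 L lam = 0"
  shows "gen_princ_eig L (mcoef r1 r2 r3) = lam"
proof -
  obtain psi dpsi C where psi: "\<forall>y. 0 < psi y"
    "weak_solution_on (\<lambda>y. L\<^sup>2 * (mcoef r1 r2 r3 y + lam)) psi dpsi UNIV"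
    "\<forall>y<0. psi y = exp (L * sqrt (- r1 - lam) * y)"
    "\<forall>y>1. psi y = C * exp (- (L * sqrt (- r3 - lam)) * (y - 1))"
    using positive_eigenfunction_of_Fdisp_zero[OF assms] .
  have range: "lam < - r1" "lam < - r3" using lam(1) unfolding lam_bar_def by auto
  have mem: "lam \<in> gpe_set L (mcoef r1 r2 r3)"
    using assms(1) psi(1,2) by (intro mem_gpe_set_of_weak_solution) auto
  have "lam' \<le> lam" if mem': "lam' \<in> gpe_set L (mcoef r1 r2 r3)" for lam'
  proof (rule ccontr)
    assume "\<not> lam' \<le> lam"
    obtain phi dphi where phi: "weak_supersolution (\<lambda>y. L\<^sup>2 * (mcoef r1 r2 r3 y + lam')) phi dphi"
      "\<forall>y. 0 < phi y"
      using weak_supersolution_of_mem_gpe_set[OF mem'] assms(1) by (metis less_irrefl)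
    have "(\<lambda>y. L\<^sup>2 * (mcoef r1 r2 r3 y + lam') - L\<^sup>2 * (lam' - lam)) = (\<lambda>y. L\<^sup>2 * (mcoef r1 r2 r3 y + lam))"
      by (simp add: fun_eq_iff algebra_simps)
    with psi(2) have "weak_solution_on (\<lambda>y. L\<^sup>2 * (mcoef r1 r2 r3 y + lam') - L\<^sup>2 * (lam' - lam)) psi dpsi UNIV"
      by simp
    then show False
    proof (rule no_weak_supersolution_above_decaying_solution[OF phi, where A=1 and C=C])
      show "0 < L\<^sup>2 * (lam' - lam)" using assms(1) \<open>\<not> lam' \<le> lam\<close> by simp
      show "\<forall>y. \<bar>L\<^sup>2 * (mcoef r1 r2 r3 y + lam')\<bar> \<le> L\<^sup>2 * (\<bar>r1\<bar> + \<bar>r2\<bar> + \<bar>r3\<bar> + \<bar>lam'\<bar>)"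
        by (auto simp: abs_mult mcoef_def intro!: mult_left_mono)
      show "- (L\<^sup>2 * (r1 + lam')) < (L * sqrt (- r1 - lam))\<^sup>2"
        "- (L\<^sup>2 * (r3 + lam')) < (L * sqrt (- r3 - lam))\<^sup>2"
        using assms(1) range \<open>\<not> lam' \<le> lam\<close> by (simp_all add: power_mult_distrib algebra_simps)
    qed (use psi assms(1) range in \<open>auto simp: mcoef_def\<close>)
  qed
  with mem show ?thesis unfolding gen_princ_eig_eq_Sup by (rule cSup_eq_maximum)
qed

section \<open>Sign changes of the dispersion function\<close>

lemma isCont_Fdisp:
  assumes "0 < L" "- r2 < lam" "lam < pi\<^sup>2 / L\<^sup>2 - r2" "sqrt (- r1 - lam) + sqrt (- r3 - lam) \<noteq> 0"
  shows "isCont (Fdisp r1 r2 r3 L) lam"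
proof -
  have "sin (L * sqrt (r2 + lam)) > 0"
    using assms L_sqrt_less_pi[OF assms(1) _ assms(3)] by (intro sin_gt_zero) auto
  moreover have "Fdisp r1 r2 r3 L = (\<lambda>x. cot (L * sqrt (r2 + x)) -
     (r2 + x - sqrt ((r1 + x) * (r3 + x))) / (sqrt (r2 + x) * (sqrt (- r1 - x) + sqrt (- r3 - x))))"
    by (simp add: fun_eq_iff Fdisp_def)
  ultimately show ?thesis using assms by (auto intro!: continuous_intros)
qed

lemma Fdisp_pos_near_neg_r2:
  assumes "0 < L" "max r1 r3 < r2" "0 < dl" "dl \<le> (r2 - max r1 r3) / 4" "dl \<le> pi\<^sup>2 / (8 * L\<^sup>2)"
  shows "0 < Fdisp r1 r2 r3 L (- r2 + dl)"
proof -
  have "(L * sqrt dl)\<^sup>2 = L\<^sup>2 * dl" using assms(3) by (simp add: power_mult_distrib)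
  also have "\<dots> \<le> pi\<^sup>2 / 8" using assms(1,5) by (simp add: field_simps)
  also have "\<dots> < (pi / 2)\<^sup>2" by (simp add: power_divide)
  finally have "L * sqrt dl < pi / 2" by (rule power_less_imp_less_base) simp
  then have "0 < cot (L * sqrt dl)" using assms(1,3) by (intro cot_gt_zero) auto
  have gap: "dl < r2 - r1 - dl" "dl < r2 - r3 - dl" using assms(2,4) by auto
  then have "dl * dl < (r2 - r1 - dl) * (r2 - r3 - dl)"
    using assms(3) by (intro mult_strict_mono) auto
  then have "dl < sqrt ((r1 + (- r2 + dl)) * (r3 + (- r2 + dl)))"
    by (intro real_less_rsqrt) (simp add: power2_eq_square algebra_simps)
  moreover have "0 < sqrt (r2 + (- r2 + dl)) * (sqrt (- r1 - (- r2 + dl)) + sqrt (- r3 - (- r2 + dl)))"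
    using assms(3) gap by (intro mult_pos_pos add_pos_pos) auto
  ultimately have "(r2 + (- r2 + dl) - sqrt ((r1 + (- r2 + dl)) * (r3 + (- r2 + dl)))) /
      (sqrt (r2 + (- r2 + dl)) * (sqrt (- r1 - (- r2 + dl)) + sqrt (- r3 - (- r2 + dl)))) < 0"
    by (intro divide_neg_pos) auto
  with \<open>0 < cot (L * sqrt dl)\<close> show ?thesis unfolding Fdisp_def by simp
qed

lemma dispersion_fraction_lower_bound:
  fixes s al be :: real
  assumes "0 < s" "0 < al" "0 < be"
  shows "- (al / s) \<le> (s\<^sup>2 - al * be) / (s * (al + be))"
proof -
  have "- (al / s) = (- al * (al + be)) / (s * (al + be))" using assms by simp
  also have "\<dots> \<le> (s\<^sup>2 - al * be) / (s * (al + be))"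
    using assms by (intro divide_right_mono) (auto simp: algebra_simps intro: order_trans[of _ 0])
  finally show ?thesis .
qed

text \<open>When L^2 (r2 + lam) reaches pi^2 before lam reaches - max r1 r3, the cotangent term
  tends to minus infinity while the fraction stays bounded below by - sqrt r2 / sqrt (r2 + lam).\<close>
lemma Fdisp_neg_near_resonance:
  assumes "0 < r1" "0 < r2" "0 < L" "pi\<^sup>2 / L\<^sup>2 - r2 \<le> - max r1 r3"
    and "0 < dl" "dl \<le> pi\<^sup>2 / (8 * L\<^sup>2)"
  obtains lr where "- r2 + dl < lr" "lr < lam_bar r1 r2 r3 L" "Fdisp r1 r2 r3 L lr < 0"
proof
  define M where "M = 2 * L * sqrt r2 / pi + 1"
  define x where "x = pi - arctan (1 / M)"
  have "0 < M" using assms unfolding M_def by (simp add: add_pos_nonneg)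
  then have x: "pi / 2 < x" "x < pi" using arctan_ubound[of "1 / M"] unfolding x_def by auto
  have cot_x: "cot x = - M"
    using \<open>0 < M\<close> unfolding x_def cot_def by (simp add: cot_altdef[unfolded cot_def] tan_arctan)
  define lr where "lr = x\<^sup>2 / L\<^sup>2 - r2"
  have xL: "r2 + lr = (x / L)\<^sup>2" unfolding lr_def by (simp add: power_divide)
  have "0 < x" "0 < x / L" using x assms(3) by simp_all
  then have s: "sqrt (r2 + lr) = x / L" "L * sqrt (r2 + lr) = x"
    using assms(3) unfolding xL by simp_all
  have "x\<^sup>2 < pi\<^sup>2" using x by (simp add: power_strict_mono)
  then show "lr < lam_bar r1 r2 r3 L"
    using assms(3,4) unfolding lr_def lam_bar_def by (simp add: divide_strict_right_mono)
  then have lr: "lr < - r1" "lr < - r3" "- r2 < lr"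
    using assms(3,4) x unfolding lam_bar_def lr_def by auto
  define al where "al = sqrt (- r1 - lr)"
  define be where "be = sqrt (- r3 - lr)"
  have "0 < al" "0 < be" using lr unfolding al_def be_def by auto
  have "al / (x / L) = al * L / x" by simp
  also have "\<dots> \<le> sqrt r2 * L / (pi / 2)"
    using assms(1,3) lr x unfolding al_def by (intro frac_le mult_right_mono) auto
  also have "\<dots> = M - 1" unfolding M_def by simp
  finally have "al / (x / L) \<le> M - 1" .
  moreover have prod: "sqrt ((r1 + lr) * (r3 + lr)) = al * be"
    unfolding al_def be_def by (simp add: real_sqrt_mult[symmetric] algebra_simps)
  have "Fdisp r1 r2 r3 L lr = - M - ((x / L)\<^sup>2 - al * be) / (x / L * (al + be))"
    unfolding Fdisp_def s(2) cot_x al_def[symmetric] be_def[symmetric] prod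
    unfolding s(1) unfolding xL ..
  ultimately show "Fdisp r1 r2 r3 L lr < 0"
    using dispersion_fraction_lower_bound[OF \<open>0 < x / L\<close> \<open>0 < al\<close> \<open>0 < be\<close>] by linarith
  have "dl * L\<^sup>2 * 8 \<le> pi\<^sup>2" using assms(3,6) by (simp add: field_simps)
  moreover have "0 < dl * L\<^sup>2" using assms(3,5) by simp
  ultimately have "dl * L\<^sup>2 * 4 < pi\<^sup>2" by linarith
  then have "dl < (pi / 2)\<^sup>2 / L\<^sup>2"
    using assms(3) by (simp add: power_divide field_simps)
  also have "\<dots> < x\<^sup>2 / L\<^sup>2" using x assms(3) by (intro divide_strict_right_mono power_strict_mono) auto
  finally show "- r2 + dl < lr" unfolding lr_def by simp
qed

lemma Fdisp_neg_at_neg_max: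
  assumes "0 < L" "max r1 r3 < r2" "r1 \<noteq> r3" "Lunder r1 r2 r3 < L"
    and "- max r1 r3 < pi\<^sup>2 / L\<^sup>2 - r2"
  shows "Fdisp r1 r2 r3 L (- max r1 r3) < 0"
proof -
  define M where "M = max r1 r3"
  define D where "D = r2 - M"
  define E where "E = sqrt (- r1 - - M) + sqrt (- r3 - - M)"
  have "0 < D" using assms(2) unfolding D_def M_def by simp
  have E: "E = sqrt \<bar>r1 - r3\<bar>" unfolding E_def M_def by (cases "r1 \<le> r3") (auto simp: max_def)
  then have "0 < E" using assms(3) by simp
  have prod: "sqrt ((r1 + - M) * (r3 + - M)) = 0" unfolding M_def by (auto simp: max_def)
  define t where "t = sqrt (D / \<bar>r1 - r3\<bar>)"
  have t: "t = sqrt D / E" "0 < t" unfolding t_def E using \<open>0 < D\<close> assms(3) by (simp_all add: real_sqrt_divide)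
  have "Lunder r1 r2 r3 = arccot t / sqrt D"
    unfolding Lunder_def t_def D_def M_def using assms(3) by simp
  then have "arccot t < L * sqrt D" using assms(4) \<open>0 < D\<close> by (simp add: divide_less_eq mult.commute)
  moreover have "L * sqrt D < pi"
    unfolding D_def using L_sqrt_less_pi[OF assms(1) _ assms(5)] assms(2) unfolding M_def by simp
  ultimately have "cot (L * sqrt D) < t"
    using cot_strict_antimono arccot_of_pos[OF \<open>0 < t\<close>] by metis
  moreover have "(r2 + - M - sqrt ((r1 + - M) * (r3 + - M))) / (sqrt (r2 + - M) * E) = sqrt D / E"
    unfolding prod using \<open>0 < D\<close> \<open>0 < E\<close> by (simp add: D_def field_simps flip: diff_conv_add_uminus)
  ultimately show ?thesis unfolding Fdisp_def t(1) M_def[symmetric] E_def[symmetric] D_def by simp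
qed

text \<open>For r1 = r3 the denominator of the fraction in Fdisp vanishes at - r1 while its numerator
  tends to r2 - r1 > 0, so Fdisp tends to minus infinity there.\<close>
lemma Fdisp_neg_of_equal_sides:
  assumes "0 < L" "r1 < r2" "- r1 < pi\<^sup>2 / L\<^sup>2 - r2" "0 < dl" "dl \<le> (r2 - r1) / 4"
  obtains lr where "- r2 + dl < lr" "lr < - r1" "Fdisp r1 r2 r1 L lr < 0"
proof
  define D where "D = r2 - r1"
  have "0 < D" using assms(2) unfolding D_def by simp
  define C0 where "C0 = cot (L * sqrt dl)"
  define rho where "rho = sqrt D / (4 * (\<bar>C0\<bar> + 1))"
  have rho: "0 < rho" unfolding rho_def using \<open>0 < D\<close> by (simp add: add_pos_nonneg)
  have "rho\<^sup>2 = D / (16 * (\<bar>C0\<bar> + 1)\<^sup>2)"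
    unfolding rho_def using \<open>0 < D\<close> by (simp add: power_divide power2_eq_square algebra_simps)
  also have "\<dots> \<le> D / 16"
    using \<open>0 < D\<close> by (intro divide_left_mono) (auto simp: one_le_power)
  finally have rho2: "rho\<^sup>2 \<le> D / 16" .
  define lr where "lr = - r1 - rho\<^sup>2"
  show "lr < - r1" unfolding lr_def using rho by simp
  show "- r2 + dl < lr" unfolding lr_def using rho2 assms(5) \<open>0 < D\<close> unfolding D_def by simp
  define s where "s = sqrt (r2 + lr)"
  have r2lr: "r2 + lr = D - rho\<^sup>2" unfolding lr_def D_def by simp
  have "sqrt dl \<le> s" "s \<le> sqrt D"
    unfolding s_def r2lr using rho2 assms(5) \<open>0 < D\<close> unfolding D_def by simp_all
  have "0 < s" using \<open>sqrt dl \<le> s\<close> assms(4) by (meson less_le_trans real_sqrt_gt_zero)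
  have "L * s < pi" unfolding s_def
  proof (rule L_sqrt_less_pi[OF assms(1)])
    show "0 \<le> r2 + lr" using r2lr rho2 \<open>0 < D\<close> by simp
    have "0 \<le> rho\<^sup>2" by simp
    then show "lr < pi\<^sup>2 / L\<^sup>2 - r2" using assms(3) unfolding lr_def by linarith
  qed
  then have cot_le: "cot (L * s) \<le> C0"
    unfolding C0_def using assms(1,4) \<open>sqrt dl \<le> s\<close> by (intro cot_antimono) auto
  have "\<bar>C0\<bar> + 1 \<le> (D - 2 * rho\<^sup>2) / (s * (rho + rho))"
  proof -
    have "s * (rho + rho) \<le> sqrt D * (2 * rho)" using \<open>s \<le> sqrt D\<close> rho by (simp add: mult_right_mono)
    also have "\<dots> = 2 * (sqrt D * sqrt D) / (4 * (\<bar>C0\<bar> + 1))" unfolding rho_def by simp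
    also have "\<dots> = D / (2 * (\<bar>C0\<bar> + 1))"
      using \<open>0 < D\<close> abs_ge_zero[of C0] by (simp add: field_simps)
    finally have "D / 2 / (D / (2 * (\<bar>C0\<bar> + 1))) \<le> (D - 2 * rho\<^sup>2) / (s * (rho + rho))"
      using rho2 \<open>0 < D\<close> \<open>0 < s\<close> rho by (intro frac_le) auto
    moreover have "D / 2 / (D / (2 * (\<bar>C0\<bar> + 1))) = \<bar>C0\<bar> + 1" using \<open>0 < D\<close> by (simp add: field_simps)
    ultimately show ?thesis by simp
  qed
  moreover have "Fdisp r1 r2 r1 L lr = cot (L * s) - (D - 2 * rho\<^sup>2) / (s * (rho + rho))"
  proof -
    have "(r1 + lr) * (r1 + lr) = (rho\<^sup>2)\<^sup>2" unfolding lr_def by (simp add: power2_eq_square)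
    then have "sqrt ((r1 + lr) * (r1 + lr)) = rho\<^sup>2" by (simp only: real_sqrt_abs abs_power2)
    moreover have "sqrt (- r1 - lr) = rho" unfolding lr_def using rho by simp
    ultimately show ?thesis unfolding Fdisp_def s_def[symmetric] using r2lr by simp
  qed
  ultimately show "Fdisp r1 r2 r1 L lr < 0" using cot_le by linarith
qed

lemma Fdisp_neg_left_of_neg_max:
  assumes "0 < L" "max r1 r3 < r2" "r1 \<noteq> r3" "Lunder r1 r2 r3 < L"
    and "- max r1 r3 < pi\<^sup>2 / L\<^sup>2 - r2" "ll < - max r1 r3"
  obtains lr where "ll < lr" "lr < - max r1 r3" "Fdisp r1 r2 r3 L lr < 0"
proof -
  have "0 < sqrt (- r1 - - max r1 r3) + sqrt (- r3 - - max r1 r3)"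
    using \<open>r1 \<noteq> r3\<close> by (cases "r1 < r3") (auto simp: max_def add_pos_nonneg add_nonneg_pos)
  then have "isCont (Fdisp r1 r2 r3 L) (- max r1 r3)"
    using assms(1,2,5) by (intro isCont_Fdisp) auto
  then have "eventually (\<lambda>y. Fdisp r1 r2 r3 L y < 0) (at (- max r1 r3))"
    using Fdisp_neg_at_neg_max[OF assms(1-5)] unfolding isCont_def by (rule order_tendstoD(2))
  then have "eventually (\<lambda>y. Fdisp r1 r2 r3 L y < 0 \<and> y \<in> {ll<..< - max r1 r3}) (at_left (- max r1 r3))"
    using eventually_at_left_real[OF assms(6)] by (auto simp: eventually_at_split elim: eventually_conj)
  then obtain y where "Fdisp r1 r2 r3 L y < 0" "y \<in> {ll<..< - max r1 r3}"
    using eventually_happens'[OF trivial_limit_at_left_real] by blast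
  then show ?thesis using that[of y] by simp
qed

lemma Fdisp_neg_below_lam_bar:
  assumes "0 < r1" "0 < r2" "0 < L" "max r1 r3 < r2" "Lunder r1 r2 r3 < L"
    and dl: "0 < dl" "dl \<le> (r2 - max r1 r3) / 4" "dl \<le> pi\<^sup>2 / (8 * L\<^sup>2)"
  obtains lr where "- r2 + dl < lr" "lr < lam_bar r1 r2 r3 L" "Fdisp r1 r2 r3 L lr < 0"
proof -
  consider "pi\<^sup>2 / L\<^sup>2 - r2 \<le> - max r1 r3"
    | "- max r1 r3 < pi\<^sup>2 / L\<^sup>2 - r2" "r1 \<noteq> r3"
    | "- max r1 r3 < pi\<^sup>2 / L\<^sup>2 - r2" "r1 = r3" by linarith
  then show ?thesis
  proof cases
    case 1
    then show ?thesis using Fdisp_neg_near_resonance[OF assms(1-3) 1 dl(1,3)] that by metis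
  next
    case 2
    moreover have "- r2 + dl < - max r1 r3" using dl assms(4) by simp
    ultimately show ?thesis
      using Fdisp_neg_left_of_neg_max[OF assms(3,4) 2(2) assms(5) 2(1)] that
      unfolding lam_bar_def by (metis min.absorb1 less_imp_le)
  next
    case 3
    then have "lam_bar r1 r2 r3 L = - r1" "r1 < r2" using assms(4) unfolding lam_bar_def by auto
    with 3 dl show ?thesis using Fdisp_neg_of_equal_sides[OF assms(3), of r1 r2 dl] that by auto
  qed
qed

lemma Fdisp_zero_exists:
  assumes "0 < r1" "0 < r2" "0 < L" "max r1 r3 < r2" "Lunder r1 r2 r3 < L"
  obtains lam where "lam \<in> {-r2<..<lam_bar r1 r2 r3 L}" "Fdisp r1 r2 r3 L lam = 0"
proof -
  define dl where "dl = min ((r2 - max r1 r3) / 4) (pi\<^sup>2 / (8 * L\<^sup>2))"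
  have "0 < dl" using assms(3,4) unfolding dl_def by simp
  moreover have "dl \<le> (r2 - max r1 r3) / 4" "dl \<le> pi\<^sup>2 / (8 * L\<^sup>2)"
    unfolding dl_def by (rule min.cobounded1, rule min.cobounded2)
  ultimately have dl: "0 < dl" "dl \<le> (r2 - max r1 r3) / 4" "dl \<le> pi\<^sup>2 / (8 * L\<^sup>2)" by blast+
  obtain lr where lr: "- r2 + dl < lr" "lr < lam_bar r1 r2 r3 L" "Fdisp r1 r2 r3 L lr < 0"
    using Fdisp_neg_below_lam_bar[OF assms dl] .
  have "continuous_on {- r2 + dl..lr} (Fdisp r1 r2 r3 L)"
  proof (intro continuous_at_imp_continuous_on ballI)
    fix x assume "x \<in> {- r2 + dl..lr}"
    then have x: "- r2 < x" "x < - r1" "x < - r3" "x < pi\<^sup>2 / L\<^sup>2 - r2"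
      using lr dl unfolding lam_bar_def by auto
    then have "0 < sqrt (- r1 - x) + sqrt (- r3 - x)" by (simp add: add_pos_pos)
    then show "isCont (Fdisp r1 r2 r3 L) x" using assms(3) x by (intro isCont_Fdisp) auto
  qed
  moreover have "0 < Fdisp r1 r2 r3 L (- r2 + dl)"
    using assms(3,4) dl by (rule Fdisp_pos_near_neg_r2)
  ultimately obtain z where "- r2 + dl \<le> z" "z \<le> lr" "Fdisp r1 r2 r3 L z = 0"
    using IVT2'[of "Fdisp r1 r2 r3 L" lr 0 "- r2 + dl"] lr by auto
  moreover have "z \<in> {-r2<..<lam_bar r1 r2 r3 L}" using calculation lr dl by auto
  ultimately show ?thesis using that by blast
qed

theorem lemma3p2:
  fixes r1 r2 r3 L :: real
  assumes "r1 > 0" "r2 > 0" "r3 > 0" "L > 0" "r2 > max r1 r3"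
  shows "(L \<le> Lunder r1 r2 r3 \<longrightarrow> gen_princ_eig L (mcoef r1 r2 r3) = - max r1 r3) \<and>
         (L > Lunder r1 r2 r3 \<longrightarrow>
            (gen_princ_eig L (mcoef r1 r2 r3) \<in> {-r2<..<lam_bar r1 r2 r3 L} \<and>
             Fdisp r1 r2 r3 L (gen_princ_eig L (mcoef r1 r2 r3)) = 0 \<and>
             (\<forall>lam\<in>{-r2<..<lam_bar r1 r2 r3 L}. Fdisp r1 r2 r3 L lam = 0 \<longrightarrow>
                lam = gen_princ_eig L (mcoef r1 r2 r3))))"
proof (intro conjI impI)
  assume "L \<le> Lunder r1 r2 r3"
  then show "gen_princ_eig L (mcoef r1 r2 r3) = - max r1 r3"
    using gen_princ_eig_eq_neg_max assms(4,5) by blast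
next
  assume "Lunder r1 r2 r3 < L"
  then obtain lam0 where lam0: "lam0 \<in> {-r2<..<lam_bar r1 r2 r3 L}" "Fdisp r1 r2 r3 L lam0 = 0"
    using Fdisp_zero_exists assms(1,2,4,5) by metis
  have eig: "gen_princ_eig L (mcoef r1 r2 r3) = lam0"
    using assms(4) lam0 by (rule gen_princ_eig_eq_Fdisp_zero)
  show "gen_princ_eig L (mcoef r1 r2 r3) \<in> {-r2<..<lam_bar r1 r2 r3 L}"
    "Fdisp r1 r2 r3 L (gen_princ_eig L (mcoef r1 r2 r3)) = 0"
    using eig lam0 by simp_all
  show "\<forall>lam\<in>{-r2<..<lam_bar r1 r2 r3 L}. Fdisp r1 r2 r3 L lam = 0 \<longrightarrow>
      lam = gen_princ_eig L (mcoef r1 r2 r3)"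
    using gen_princ_eig_eq_Fdisp_zero[OF assms(4)] by auto
qed

end
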